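(* Let $L\in R[x][\partial]$ have positive order and let $c$ be a non-unit element of $R$. If $L$ is $R$-primitive and $c$ divides $\mathrm{lc}_\partial(L)$, then $c$ divides $\mathrm{lc}_\partial(Q)$ for every $Q\in\mathrm{cont}(L)\setminus\{0\}$.
   Context: $R$ is a principal ideal domain with quotient field $Q_R$; $\sigma$ is an $R$-automorphism of $R[x]$ with $\sigma(x)=\gamma x+\tau$ ($\gamma,\tau\in R$, $\gamma$ a unit), $\delta$ an $R$-linear $\sigma$-derivation of $R[x]$ ($\delta(fg)=\sigma(f)\delta(g)+\delta(f)g$) with $\deg\delta(x)\le1$; $R[x][\partial]$ is the Ore algebra with $\partial p=\sigma(p)\partial+\delta(p)$, inside $Q_R(x)[\partial]$. $\mathrm{lc}_\partial$ denotes the leading coefficient with respect to $\partial$, and $\mathrm{cont}(L)=Q_R(x)[\partial]L\cap R[x][\partial]$. Writing $L=a_kf_k\partial^k+\dots+a_0f_0$ with $a_i\in R$ and $f_i\in R[x]$ primitive (gcd of coefficients $1$), $L$ is $R$-primitive if $\gcd(a_0,\dots,a_k)=1$. *)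

theory Defs
  imports "HOL-Computational_Algebra.Polynomial" "HOL-Computational_Algebra.Fraction_Field"
begin

definition ideal_R :: "'a::comm_ring_1 set \<Rightarrow> bool" where
  "ideal_R I \<longleftrightarrow> I \<noteq> {} \<and> (\<forall>x\<in>I. \<forall>y\<in>I. x + y \<in> I) \<and> (\<forall>x\<in>I. \<forall>r. r * x \<in> I)"

definition pid_type :: "'a::idom itself \<Rightarrow> bool" where
  "pid_type _ \<longleftrightarrow> (\<forall>I::'a set. ideal_R I \<longrightarrow> (\<exists>g. I = {r * g | r. True}))"

definition sigma_of :: "'a::comm_ring_1 \<Rightarrow> 'a \<Rightarrow> 'a poly \<Rightarrow> 'a poly" where
  "sigma_of \<gamma> \<tau> p = pcompose p [:\<tau>, \<gamma>:]"

(* Ore operators are represented as polynomials in \<partial> with coefficients in K.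
   Left multiplication by \<partial>:  \<partial> (a \<partial>^i) = sigma(a) \<partial>^(i+1) + delta(a) \<partial>^i *)
definition ore_dmul :: "('k \<Rightarrow> 'k) \<Rightarrow> ('k \<Rightarrow> 'k) \<Rightarrow> 'k::comm_ring_1 poly \<Rightarrow> 'k poly" where
  "ore_dmul s d L = pCons 0 (map_poly s L) + map_poly d L"

definition ore_mult :: "('k \<Rightarrow> 'k) \<Rightarrow> ('k \<Rightarrow> 'k) \<Rightarrow> 'k::comm_ring_1 poly \<Rightarrow> 'k poly \<Rightarrow> 'k poly" where
  "ore_mult s d P L = (\<Sum>j\<le>degree P. smult (coeff P j) ((ore_dmul s d ^^ j) L))"

definition sigmaF :: "('a::idom poly \<Rightarrow> 'a poly) \<Rightarrow> 'a poly fract \<Rightarrow> 'a poly fract" where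
  "sigmaF s y = (SOME z. \<exists>p q. q \<noteq> 0 \<and> y = Fract p q \<and> z = Fract (s p) (s q))"

definition deltaF :: "('a::idom poly \<Rightarrow> 'a poly) \<Rightarrow> ('a poly \<Rightarrow> 'a poly) \<Rightarrow> 'a poly fract \<Rightarrow> 'a poly fract" where
  "deltaF s d y = (SOME z. \<exists>p q. q \<noteq> 0 \<and> y = Fract p q \<and>
      z = Fract (q * d p - p * d q) (q * s q))"

definition embF :: "'a::idom poly poly \<Rightarrow> 'a poly fract poly" where
  "embF L = map_poly (\<lambda>p. Fract p 1) L"

(* cont(L) = Q_R(x)[\<partial>] L \<inter> R[x][\<partial>] *)
definition ore_cont :: "('a::idom poly \<Rightarrow> 'a poly) \<Rightarrow> ('a poly \<Rightarrow> 'a poly) \<Rightarrow> 'a poly poly \<Rightarrow> 'a poly poly set" where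
  "ore_cont s d L = {Q. \<exists>P. embF Q = ore_mult (sigmaF s) (deltaF s d) P (embF L)}"

definition primitive_R :: "'a::idom poly \<Rightarrow> bool" where
  "primitive_R f \<longleftrightarrow> (\<forall>d. (\<forall>j. d dvd coeff f j) \<longrightarrow> d dvd 1)"

definition R_primitive :: "'a::idom poly poly \<Rightarrow> bool" where
  "R_primitive L \<longleftrightarrow> (\<exists>a f. (\<forall>i. coeff L i = smult (a i) (f i) \<and> primitive_R (f i)) \<and>
      (\<forall>d. (\<forall>i\<le>degree L. d dvd a i) \<longrightarrow> d dvd 1))"

end

theory Submission
  imports Defs
begin

(* Clearing denominators, every Q in cont(L) satisfies v Q = P L in R[x][\<partial>] for some
   nonzero v in R[x]. Gauss's lemma holds for Ore products: if a prime p of R divides P L but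
   not L, it divides P, because the leading coefficient of a product is lc(P) \<sigma>^k(lc L) and
   \<sigma> preserves divisibility by p. An R-primitive L is divisible by no prime, so p can be
   cancelled from v until p does not divide v; this descent terminates since R is a PID.
   Then c divides v lc(Q) = lc(P) \<sigma>^k(lc L) with p not dividing v, and since p remains prime
   in R[x], peeling off the prime factors of c one at a time shows that c divides lc(Q). *)

definition strict_dvd_rel :: "('a::idom \<times> 'a) set" where
  "strict_dvd_rel = {(a, b). a dvd b \<and> \<not> b dvd a \<and> b \<noteq> 0}"

lemma strict_dvd_rel_prime_cofactor:
  assumes "prime_elem p" "a \<noteq> 0"
  shows "(a, p * a) \<in> strict_dvd_rel"
proof -
  have "\<not> p * a dvd a"
  proof
    assume "p * a dvd a"
    then obtain k where "a = p * a * k" ..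
    then have "a * 1 = a * (p * k)"
      by (simp add: ac_simps)
    with assms have "p dvd 1"
      by (metis dvd_triv_left mult_left_cancel)
    with assms(1) show False
      by (simp add: prime_elem_def)
  qed
  with assms show ?thesis
    by (simp add: strict_dvd_rel_def)
qed

lemma pid_principal:
  assumes "pid_type TYPE('a::idom)" and "ideal_R (I :: 'a set)"
  obtains g where "g \<in> I" "\<And>x. x \<in> I \<Longrightarrow> g dvd x"
proof -
  obtain g where g: "I = {r * g | r. True}"
    using assms unfolding pid_type_def by blast
  have "g \<in> I" unfolding g by (rule CollectI, rule exI[of _ 1]) simp
  moreover have "g dvd x" if "x \<in> I" for x
    using that unfolding g by auto
  ultimately show thesis by (rule that)
qed

lemma wf_strict_dvd_rel:
  assumes pid: "pid_type TYPE('a::idom)"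
  shows "wf (strict_dvd_rel :: ('a \<times> 'a) set)"
  unfolding wf_iff_no_infinite_down_chain
proof
  assume "\<exists>f. \<forall>i. (f (Suc i), f i) \<in> (strict_dvd_rel :: ('a \<times> 'a) set)"
  then obtain f :: "nat \<Rightarrow> 'a" where f: "\<And>i. (f (Suc i), f i) \<in> strict_dvd_rel"
    by blast
  have chain: "f j dvd f i" if "i \<le> j" for i j
    using that
  proof (induction rule: dec_induct)
    case (step n)
    then show ?case using f[of n] by (auto simp: strict_dvd_rel_def intro: dvd_trans)
  qed simp
  define I where "I = {r * f i | r i. True}"
  have "ideal_R I"
    unfolding ideal_R_def
  proof (intro conjI ballI allI)
    fix x y assume "x \<in> I" "y \<in> I"
    then obtain r s i j where "x = r * f i" "y = s * f j"
      unfolding I_def by blast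
    then have "f (max i j) dvd x + y"
      using chain[of i "max i j"] chain[of j "max i j"] by (simp add: dvd_add dvd_mult)
    then obtain k where "x + y = f (max i j) * k" ..
    then show "x + y \<in> I"
      unfolding I_def by (auto simp: mult.commute)
  qed (auto simp: I_def intro: mult.assoc[symmetric])
  then obtain g where "g \<in> I" and g: "\<And>x. x \<in> I \<Longrightarrow> g dvd x"
    using pid_principal[OF pid] by blast
  then obtain r i where "g = r * f i"
    unfolding I_def by blast
  moreover have "g dvd f (Suc i)"
    by (rule g, unfold I_def, intro CollectI exI[of _ 1] exI[of _ "Suc i"]) simp
  ultimately have "f i dvd f (Suc i)"
    by (auto intro: dvd_trans)
  then show False
    using f[of i] by (simp add: strict_dvd_rel_def)
qed

lemma pid_bezout:
  fixes a b :: "'a::idom"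
  assumes "pid_type TYPE('a)"
  obtains g x y where "g = x * a + y * b" "g dvd a" "g dvd b"
proof -
  define I where "I = {x * a + y * b | x y. True}"
  have "ideal_R I"
    unfolding ideal_R_def
  proof (intro conjI ballI allI)
    fix u w assume "u \<in> I" "w \<in> I"
    then obtain x y x' y' where "u = x * a + y * b" "w = x' * a + y' * b"
      unfolding I_def by blast
    then have "u + w = (x + x') * a + (y + y') * b"
      by (simp add: algebra_simps)
    then show "u + w \<in> I"
      unfolding I_def by blast
  next
    fix u r assume "u \<in> I"
    then obtain x y where "u = x * a + y * b"
      unfolding I_def by blast
    then have "r * u = (r * x) * a + (r * y) * b"
      by (simp add: algebra_simps)
    then show "r * u \<in> I"
      unfolding I_def by blast
  qed (auto simp: I_def)
  then obtain g where "g \<in> I" and g: "\<And>z. z \<in> I \<Longrightarrow> g dvd z"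
    using pid_principal[OF assms] by blast
  moreover have "a = 1 * a + 0 * b" "b = 0 * a + 1 * b"
    by simp_all
  then have "a \<in> I" "b \<in> I"
    unfolding I_def by blast+
  then have "g dvd a" "g dvd b"
    by (simp_all add: g)
  ultimately show thesis
    using that unfolding I_def by blast
qed

lemma pid_prime_divisor:
  assumes pid: "pid_type TYPE('a::idom)" and "d \<noteq> 0" "\<not> d dvd 1"
  shows "\<exists>p. prime_elem p \<and> p dvd (d :: 'a)"
  using assms(2,3)
proof (induction d rule: wf_induct[OF wf_strict_dvd_rel[OF pid]])
  case (1 d)
  show ?case
  proof (cases "\<exists>a. a dvd d \<and> \<not> a dvd 1 \<and> \<not> d dvd a")
    case True
    then obtain a where a: "a dvd d" "\<not> a dvd 1" "\<not> d dvd a"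
      by blast
    with 1 obtain p where "prime_elem p" "p dvd a"
      by (auto simp: strict_dvd_rel_def)
    with a show ?thesis
      by (blast intro: dvd_trans)
  next
    case False
    have "prime_elem d"
    proof (rule prime_elemI)
      fix a b assume dab: "d dvd a * b"
      show "d dvd a \<or> d dvd b"
      proof (cases "d dvd a")
        case False
        obtain g x y where g: "g = x * d + y * a" "g dvd d" "g dvd a"
          using pid by (rule pid_bezout)
        have "g dvd 1"
          using \<open>\<not> (\<exists>a. a dvd d \<and> \<not> a dvd 1 \<and> \<not> d dvd a)\<close> False g(2,3)
          by (blast intro: dvd_trans)
        then obtain w where "1 = g * w" ..
        then have "b = b * (g * w)"
          by simp
        also have "\<dots> = d * (x * w * b) + (a * b) * (y * w)"
          by (simp add: g(1) algebra_simps)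
        finally have "b = d * (x * w * b) + (a * b) * (y * w)" .
        then have "d dvd b"
          using dab by (metis dvd_add dvd_mult2 dvd_triv_left)
        then show ?thesis ..
      qed simp
    qed (use 1 in auto)
    then show ?thesis
      using dvd_refl by blast
  qed
qed

lemma const_poly_dvd_by_prime_multipliers:
  fixes c :: "'a::idom" and x :: "'a poly"
  assumes pid: "pid_type TYPE('a)" and c: "c \<noteq> 0"
    and multipliers: "\<And>p. prime_elem p \<Longrightarrow> \<exists>u. \<not> [:p:] dvd u \<and> [:c:] dvd u * x"
  shows "[:c:] dvd x"
proof -
  have "d dvd c \<Longrightarrow> [:d:] dvd x" for d
  proof (induction d rule: wf_induct[OF wf_strict_dvd_rel[OF pid]])
    case (1 d)
    have "d \<noteq> 0" using 1(2) c by auto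
    show ?case
    proof (cases "d dvd 1")
      case True
      then obtain e where "1 = d * e" ..
      then have "1 = [:d:] * [:e:]"
        by (simp add: one_pCons mult.commute)
      then show ?thesis
        by (metis dvdI dvd_trans one_dvd)
    next
      case False
      obtain p where p: "prime_elem p" "p dvd d"
        using pid_prime_divisor[OF pid \<open>d \<noteq> 0\<close> False] by blast
      then obtain d' where d: "d = p * d'"
        by (elim dvdE)
      with \<open>d \<noteq> 0\<close> have "d' \<noteq> 0" by auto
      have "[:d':] dvd x"
        using 1 strict_dvd_rel_prime_cofactor[OF p(1) \<open>d' \<noteq> 0\<close>] d by (auto intro: dvd_trans)
      then obtain w where w: "x = [:d':] * w" ..
      obtain u where u: "\<not> [:p:] dvd u" "[:c:] dvd u * x"
        using multipliers p(1) by blast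
      have "[:d:] dvd [:c:]"
        using 1(2) by simp
      then have "[:d:] dvd u * x"
        using u(2) by (rule dvd_trans)
      moreover have dd: "[:d:] = [:d':] * [:p:]" and "u * x = [:d':] * (u * w)"
        using d w by (simp_all add: ac_simps)
      ultimately have "[:p:] dvd u * w"
        using \<open>d' \<noteq> 0\<close> by (metis dvd_mult_cancel_left pCons_eq_0_iff)
      with u(1) p(1) have "[:p:] dvd w"
        by (simp add: prime_elem_const_poly_iff prime_elem_dvd_mult_iff)
      then have "[:d':] * [:p:] dvd [:d':] * w"
        by (intro mult_dvd_mono dvd_refl)
      then show ?thesis
        by (simp only: dd w)
    qed
  qed
  then show ?thesis by simp
qed

lemma poly_split_off_const_multiple:
  fixes X :: "'a::idom poly"
  assumes "\<not> [:k:] dvd X"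
  shows "\<exists>A B. X = A + B \<and> [:k:] dvd B \<and> \<not> k dvd lead_coeff A"
  using assms
proof (induction "degree X" arbitrary: X rule: less_induct)
  case less
  show ?case
  proof (cases "k dvd lead_coeff X")
    case False
    then show ?thesis by (intro exI[of _ X] exI[of _ 0]) simp
  next
    case True
    then obtain c where c: "lead_coeff X = k * c" ..
    define T where "T = monom (lead_coeff X) (degree X)"
    have T: "[:k:] dvd T"
      by (rule dvdI[of _ _ "monom c (degree X)"]) (simp add: T_def c smult_monom)
    have X: "X = (X - T) + T"
      by simp
    have rest: "\<not> [:k:] dvd X - T"
      using less.prems T X by (metis dvd_add)
    then have "X - T \<noteq> 0"
      by auto
    moreover have "coeff (X - T) (degree X) = 0"
      by (simp add: T_def)
    moreover have "degree (X - T) \<le> degree X"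
      unfolding T_def by (rule degree_diff_le) (simp_all add: degree_monom_le)
    ultimately have "degree (X - T) < degree X"
      by (metis le_neq_implies_less leading_coeff_0_iff)
    from less.hyps[OF this rest] obtain A B
      where "X - T = A + B" "[:k:] dvd B" "\<not> k dvd lead_coeff A"
      by blast
    with X T show ?thesis
      by (intro exI[of _ A] exI[of _ "B + T"]) (simp add: add.assoc)
  qed
qed

lemma sigma_of_mult: "sigma_of \<gamma> \<tau> (p * q) = sigma_of \<gamma> \<tau> p * sigma_of \<gamma> \<tau> q"
  by (simp add: sigma_of_def pcompose_mult)

lemma sigma_of_smult: "sigma_of \<gamma> \<tau> (smult a p) = smult a (sigma_of \<gamma> \<tau> p)"
  by (simp add: sigma_of_def pcompose_smult)

lemma sigma_of_0 [simp]: "sigma_of \<gamma> \<tau> 0 = 0"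
  by (simp add: sigma_of_def)

lemma sigma_of_left_inverse:
  assumes "\<gamma> * g = 1"
  shows "sigma_of g (- (\<tau> * g)) (sigma_of \<gamma> \<tau> f) = f"
proof -
  have "pcompose [:\<tau>, \<gamma>:] [:- (\<tau> * g), g:] = [:0, 1:]"
    using assms by (simp add: pcompose_pCons mult.left_commute[of \<gamma>])
  then show ?thesis
    by (simp add: sigma_of_def pcompose_assoc[symmetric])
qed

lemma sigma_of_eq_0_iff:
  assumes "\<gamma> dvd 1"
  shows "sigma_of \<gamma> \<tau> f = 0 \<longleftrightarrow> f = 0"
proof -
  from assms obtain g where "\<gamma> * g = 1"
    by (metis dvdE)
  from sigma_of_left_inverse[OF this, of \<tau> f] show ?thesis
    by (auto simp: sigma_of_def)
qed

lemma const_dvd_sigma_of_iff: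
  assumes "\<gamma> dvd 1"
  shows "[:a:] dvd sigma_of \<gamma> \<tau> f \<longleftrightarrow> [:a:] dvd f"
proof
  assume "[:a:] dvd f"
  then obtain h where "f = smult a h" by auto
  then have "sigma_of \<gamma> \<tau> f = [:a:] * sigma_of \<gamma> \<tau> h"
    by (simp add: sigma_of_smult)
  then show "[:a:] dvd sigma_of \<gamma> \<tau> f"
    by (rule dvdI)
next
  assume "[:a:] dvd sigma_of \<gamma> \<tau> f"
  then obtain h where h: "sigma_of \<gamma> \<tau> f = smult a h" by auto
  from assms obtain g where "\<gamma> * g = 1"
    by (metis dvdE)
  from sigma_of_left_inverse[OF this, of \<tau> f] h
  have "f = [:a:] * sigma_of g (- (\<tau> * g)) h"
    by (simp add: sigma_of_smult)
  then show "[:a:] dvd f"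
    by (rule dvdI)
qed

lemma sigma_of_pow_eq_0_iff:
  "\<gamma> dvd 1 \<Longrightarrow> (sigma_of \<gamma> \<tau> ^^ j) f = 0 \<longleftrightarrow> f = 0"
  by (induction j) (simp_all add: sigma_of_eq_0_iff)

lemma const_dvd_sigma_of_pow_iff:
  "\<gamma> dvd 1 \<Longrightarrow> [:a:] dvd (sigma_of \<gamma> \<tau> ^^ j) f \<longleftrightarrow> [:a:] dvd f"
  by (induction j) (simp_all add: const_dvd_sigma_of_iff)

lemma ore_mult_conv_sum:
  assumes "degree P \<le> N"
  shows "ore_mult s d P L = (\<Sum>j\<le>N. smult (coeff P j) ((ore_dmul s d ^^ j) L))"
  unfolding ore_mult_def
  by (rule sum.mono_neutral_left) (use assms in \<open>auto simp: coeff_eq_0\<close>)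

lemma ore_mult_0_left [simp]: "ore_mult s d 0 L = 0"
  by (simp add: ore_mult_def)

lemma ore_mult_add_left:
  "ore_mult s d (P1 + P2) L = ore_mult s d P1 L + ore_mult s d P2 L"
proof -
  let ?N = "max (degree P1) (degree P2)"
  have "degree (P1 + P2) \<le> ?N"
    by (rule degree_add_le) auto
  then show ?thesis
    by (simp add: ore_mult_conv_sum[of _ ?N] ore_mult_conv_sum[of P1 ?N] ore_mult_conv_sum[of P2 ?N]
        smult_add_left sum.distrib)
qed

lemma smult_sum_right: "smult k (sum f A) = (\<Sum>i\<in>A. smult k (f i))"
  by (induction A rule: infinite_finite_induct) (simp_all add: smult_add_right)

lemma ore_mult_smult_left:
  "ore_mult s d (smult k P) L = smult k (ore_mult s d P L)"
  by (simp add: ore_mult_conv_sum[OF degree_smult_le] ore_mult_conv_sum[of P "degree P"]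
      smult_sum_right mult.assoc)

lemma coeff_ore_dmul:
  assumes "s 0 = 0" "d 0 = 0"
  shows "coeff (ore_dmul s d X) n = (case n of 0 \<Rightarrow> 0 | Suc m \<Rightarrow> s (coeff X m)) + d (coeff X n)"
  using assms by (cases n) (simp_all add: ore_dmul_def coeff_map_poly coeff_pCons)

lemma embF_pCons: "embF (pCons c X) = pCons (Fract c 1) (embF X)"
  unfolding embF_def by (rule map_poly_pCons) (simp add: fract_collapse)

lemma embF_smult: "embF (smult c X) = smult (Fract c 1) (embF X)"
  unfolding embF_def by (rule map_poly_smult) (simp_all add: fract_collapse)

lemma coeff_embF: "coeff (embF X) n = Fract (coeff X n) 1"
  unfolding embF_def by (rule coeff_map_poly) (simp add: fract_collapse)

lemma degree_embF: "degree (embF X) = degree X"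
  unfolding embF_def by (rule degree_map_poly) (simp add: eq_fract Zero_fract_def)

lemma Fract_add_1: "Fract (a + b) 1 = Fract a 1 + Fract b 1"
  by simp

lemma Fract_sum: "Fract (sum f A) 1 = (\<Sum>i\<in>A. Fract (f i) 1)"
  by (induction A rule: infinite_finite_induct) (simp_all add: fract_collapse Fract_add_1)

lemma embF_clear_denominators:
  obtains v P' where "v \<noteq> 0" "P = smult (Fract 1 v) (embF P')"
proof (induction P arbitrary: thesis rule: pCons_induct)
  case 0
  show ?case
    by (rule 0[of 1 0]) (simp_all add: embF_def)
next
  case (pCons a P)
  obtain v P' where v: "v \<noteq> 0" and P: "P = smult (Fract 1 v) (embF P')"
    by (rule pCons.IH)
  obtain x y where a: "a = Fract x y" and y: "y \<noteq> 0"
    by (cases a)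
  have "a = Fract (x * v) (y * v)" "Fract y (y * v) = Fract 1 v"
    using a y v by (simp_all add: eq_fract)
  then have "pCons a P = smult (Fract 1 (y * v)) (embF (pCons (x * v) (smult y P')))"
    by (simp add: embF_pCons embF_smult P)
  with v y show ?case
    by (intro pCons.prems[of "y * v"]) simp_all
qed

locale ore_algebra =
  fixes \<gamma> \<tau> :: "'a::idom" and \<delta> :: "'a poly \<Rightarrow> 'a poly"
  assumes gamma_unit: "\<gamma> dvd 1"
    and delta_add: "\<And>p q. \<delta> (p + q) = \<delta> p + \<delta> q"
    and delta_lin: "\<And>r p. \<delta> (smult r p) = smult r (\<delta> p)"
    and delta_deriv: "\<And>f g. \<delta> (f * g) = sigma_of \<gamma> \<tau> f * \<delta> g + \<delta> f * g"
begin

abbreviation \<sigma> where "\<sigma> \<equiv> sigma_of \<gamma> \<tau>"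
abbreviation dmul where "dmul \<equiv> ore_dmul \<sigma> \<delta>"
abbreviation omult where "omult \<equiv> ore_mult \<sigma> \<delta>"

lemma delta_0 [simp]: "\<delta> 0 = 0"
  using delta_lin[of 0 0] by simp

lemma coeff_dmul:
  "coeff (dmul X) n = (case n of 0 \<Rightarrow> 0 | Suc m \<Rightarrow> \<sigma> (coeff X m)) + \<delta> (coeff X n)"
  by (rule coeff_ore_dmul) (simp_all add: sigma_of_def)

lemma dmul_add: "dmul (X + Y) = dmul X + dmul Y"
  by (rule poly_eqI) (simp add: coeff_dmul sigma_of_def pcompose_add delta_add split: nat.split)

lemma dmul_smult_const: "dmul (smult [:a:] X) = smult [:a:] (dmul X)"
  by (rule poly_eqI) (simp add: coeff_dmul sigma_of_smult delta_lin smult_add_right split: nat.split)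

lemma dmul_pow_add: "(dmul ^^ j) (X + Y) = (dmul ^^ j) X + (dmul ^^ j) Y"
  by (induction j) (simp_all add: dmul_add)

lemma dmul_pow_smult_const: "(dmul ^^ j) (smult [:a:] X) = smult [:a:] ((dmul ^^ j) X)"
  by (induction j) (simp_all add: dmul_smult_const)

lemma dmul_pow_top:
  assumes "degree Y \<le> n"
  shows "degree ((dmul ^^ j) Y) \<le> n + j \<and> coeff ((dmul ^^ j) Y) (n + j) = (\<sigma> ^^ j) (coeff Y n)"
proof (induction j)
  case (Suc j)
  then have "degree (dmul ((dmul ^^ j) Y)) \<le> Suc (n + j)"
    by (intro degree_le) (auto simp: coeff_dmul coeff_eq_0 split: nat.split)
  with Suc show ?case
    by (simp add: coeff_dmul coeff_eq_0)
qed (use assms in simp)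

lemma omult_add_right: "omult P (X + Y) = omult P X + omult P Y"
  by (simp add: ore_mult_def dmul_pow_add smult_add_right sum.distrib)

lemma omult_smult_const_right: "omult P (smult [:a:] X) = smult [:a:] (omult P X)"
  by (simp add: ore_mult_def dmul_pow_smult_const smult_sum_right mult.commute)

lemma omult_top:
  "degree (omult P L) \<le> degree P + degree L \<and>
   coeff (omult P L) (degree P + degree L) = lead_coeff P * (\<sigma> ^^ degree P) (lead_coeff L)"
proof
  have top: "degree ((dmul ^^ j) L) \<le> degree L + j"
    "coeff ((dmul ^^ j) L) (degree L + j) = (\<sigma> ^^ j) (lead_coeff L)" for j
    using dmul_pow_top[of L "degree L" j] by simp_all
  have "degree (smult (coeff P j) ((dmul ^^ j) L)) \<le> degree P + degree L" if "j \<le> degree P" for j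
    using top(1)[of j] that degree_smult_le[of "coeff P j" "(dmul ^^ j) L"] by linarith
  then show "degree (omult P L) \<le> degree P + degree L"
    unfolding ore_mult_def by (intro degree_sum_le) auto
  have "coeff (smult (coeff P j) ((dmul ^^ j) L)) (degree P + degree L) = 0" if "j < degree P" for j
    using top(1)[of j] that by (simp add: coeff_eq_0)
  moreover have "{..degree P} = insert (degree P) {..<degree P}"
    by auto
  ultimately have "coeff (omult P L) (degree P + degree L)
      = coeff (smult (lead_coeff P) ((dmul ^^ degree P) L)) (degree P + degree L)"
    unfolding ore_mult_def coeff_sum by (simp add: sum.neutral)
  then show "coeff (omult P L) (degree P + degree L) = lead_coeff P * (\<sigma> ^^ degree P) (lead_coeff L)"
    using top(2)[of "degree P"] by (simp add: add.commute)
qed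

lemma lead_coeff_omult:
  assumes "P \<noteq> 0" "L \<noteq> 0"
  shows "lead_coeff (omult P L) = lead_coeff P * (\<sigma> ^^ degree P) (lead_coeff L)"
proof -
  have "lead_coeff P * (\<sigma> ^^ degree P) (lead_coeff L) \<noteq> 0"
    using assms gamma_unit by (simp add: sigma_of_pow_eq_0_iff)
  with omult_top[of P L] have "degree (omult P L) = degree P + degree L"
    by (metis le_antisym le_degree)
  with omult_top[of P L] show ?thesis
    by simp
qed

lemma not_const_dvd_omult:
  assumes p: "prime_elem p" and P: "\<not> [:[:p:]:] dvd P" and L: "\<not> [:[:p:]:] dvd L"
  shows "\<not> [:[:p:]:] dvd omult P L"
proof
  assume PL: "[:[:p:]:] dvd omult P L"
  obtain A B where P': "P = A + B" "[:[:p:]:] dvd B" "\<not> [:p:] dvd lead_coeff A"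
    using poly_split_off_const_multiple[OF P] by blast
  obtain C E where L': "L = C + E" "[:[:p:]:] dvd E" "\<not> [:p:] dvd lead_coeff C"
    using poly_split_off_const_multiple[OF L] by blast
  from P'(2) L'(2) obtain B' E' where B: "B = smult [:p:] B'" and E: "E = smult [:p:] E'"
    by (auto elim!: dvdE)
  define R where "R = omult A E' + omult B' C + omult B' E"
  have "omult P L = omult A C + smult [:p:] R"
    by (simp add: R_def P'(1) L'(1) B E omult_add_right ore_mult_add_left
        omult_smult_const_right ore_mult_smult_left smult_add_right)
  moreover have "[:[:p:]:] dvd smult [:p:] R"
    using dvd_triv_left[of "[:[:p:]:]" R] by simp
  ultimately have "[:[:p:]:] dvd omult A C"
    using PL by (simp add: dvd_add_left_iff)
  then have "[:p:] dvd coeff (omult A C) (degree A + degree C)"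
    by (simp add: const_poly_dvd_iff)
  then have "[:p:] dvd lead_coeff A * (\<sigma> ^^ degree A) (lead_coeff C)"
    using omult_top[of A C] by simp
  moreover have "\<not> [:p:] dvd (\<sigma> ^^ degree A) (lead_coeff C)"
    using L'(3) gamma_unit by (simp add: const_dvd_sigma_of_pow_iff)
  ultimately show False
    using P'(3) p by (simp add: prime_elem_const_poly_iff prime_elem_dvd_mult_iff)
qed

lemma omult_cancel_const:
  assumes p: "prime_elem p" and L: "\<not> [:[:p:]:] dvd L" and Y: "smult [:p:] Y = omult P L"
  obtains P' where "Y = omult P' L"
proof -
  have "[:[:p:]:] dvd omult P L"
    using Y dvd_triv_left[of "[:[:p:]:]" Y] by simp
  then have "[:[:p:]:] dvd P"
    using not_const_dvd_omult[OF p _ L] by blast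
  then obtain P' where "P = smult [:p:] P'"
    by (auto elim!: dvdE)
  with Y have "smult [:p:] Y = smult [:p:] (omult P' L)"
    by (simp add: ore_mult_smult_left)
  moreover have "[:p:] \<noteq> 0"
    using p by (simp add: prime_elem_def)
  ultimately have "Y = omult P' L"
    by (metis smult_cancel)
  then show thesis
    by (rule that)
qed

lemma sigmaF_Fract_1: "sigmaF \<sigma> (Fract p 1) = Fract (\<sigma> p) 1"
  unfolding sigmaF_def
proof (rule someI2_ex)
  show "\<exists>z p' q'. q' \<noteq> 0 \<and> Fract p 1 = Fract p' q' \<and> z = Fract (\<sigma> p') (\<sigma> q')"
    by (intro exI[of _ p] exI[of _ 1] exI) simp
next
  fix z assume "\<exists>p' q'. q' \<noteq> 0 \<and> Fract p 1 = Fract p' q' \<and> z = Fract (\<sigma> p') (\<sigma> q')"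
  then obtain p' q' where q': "q' \<noteq> 0" and "Fract p 1 = Fract p' q'" and z: "z = Fract (\<sigma> p') (\<sigma> q')"
    by blast
  then have "p' = p * q'"
    by (simp add: eq_fract)
  moreover have "\<sigma> q' \<noteq> 0"
    using q' gamma_unit by (simp add: sigma_of_eq_0_iff)
  ultimately show "z = Fract (\<sigma> p) 1"
    using z by (simp add: eq_fract sigma_of_mult)
qed

lemma deltaF_Fract_1: "deltaF \<sigma> \<delta> (Fract p 1) = Fract (\<delta> p) 1"
  unfolding deltaF_def
proof (rule someI2_ex)
  show "\<exists>z p' q'. q' \<noteq> 0 \<and> Fract p 1 = Fract p' q' \<and> z = Fract (q' * \<delta> p' - p' * \<delta> q') (q' * \<sigma> q')"
    by (intro exI[of _ p] exI[of _ 1] exI) simp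
next
  fix z assume "\<exists>p' q'. q' \<noteq> 0 \<and> Fract p 1 = Fract p' q' \<and> z = Fract (q' * \<delta> p' - p' * \<delta> q') (q' * \<sigma> q')"
  then obtain p' q' where q': "q' \<noteq> 0" and "Fract p 1 = Fract p' q'"
    and z: "z = Fract (q' * \<delta> p' - p' * \<delta> q') (q' * \<sigma> q')"
    by blast
  then have p': "p' = q' * p"
    by (simp add: eq_fract mult.commute)
  have "q' * \<delta> p' - p' * \<delta> q' = q' * \<sigma> q' * \<delta> p"
    unfolding p' delta_deriv by (simp add: algebra_simps)
  moreover have "q' * \<sigma> q' \<noteq> 0"
    using q' gamma_unit by (simp add: sigma_of_eq_0_iff)
  ultimately show "z = Fract (\<delta> p) 1"
    using z by (simp add: eq_fract)
qed

lemma ore_dmul_embF: "ore_dmul (sigmaF \<sigma>) (deltaF \<sigma> \<delta>) (embF X) = embF (dmul X)"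
proof (rule poly_eqI)
  have "sigmaF \<sigma> 0 = 0" "deltaF \<sigma> \<delta> 0 = 0"
    using sigmaF_Fract_1[of 0] deltaF_Fract_1[of 0] by (simp_all add: fract_collapse)
  then show "coeff (ore_dmul (sigmaF \<sigma>) (deltaF \<sigma> \<delta>) (embF X)) n = coeff (embF (dmul X)) n" for n
    by (cases n) (simp_all add: coeff_ore_dmul coeff_embF coeff_dmul sigmaF_Fract_1 deltaF_Fract_1
        fract_collapse)
qed

lemma ore_mult_embF:
  "ore_mult (sigmaF \<sigma>) (deltaF \<sigma> \<delta>) (embF P) (embF L) = embF (omult P L)"
proof -
  have "(ore_dmul (sigmaF \<sigma>) (deltaF \<sigma> \<delta>) ^^ j) (embF X) = embF ((dmul ^^ j) X)" for j X
    by (induction j) (simp_all add: ore_dmul_embF)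
  then show ?thesis
    by (intro poly_eqI) (simp add: ore_mult_def degree_embF coeff_sum coeff_embF Fract_sum)
qed

lemma ore_cont_clear_denominators:
  assumes "Q \<in> ore_cont \<sigma> \<delta> L"
  obtains v P where "v \<noteq> 0" "smult v Q = omult P L"
proof -
  obtain P where P: "embF Q = ore_mult (sigmaF \<sigma>) (deltaF \<sigma> \<delta>) P (embF L)"
    using assms unfolding ore_cont_def by blast
  obtain v P' where v: "v \<noteq> 0" and P': "P = smult (Fract 1 v) (embF P')"
    by (rule embF_clear_denominators)
  have Q: "embF Q = smult (Fract 1 v) (embF (omult P' L))"
    using P unfolding P' ore_mult_smult_left ore_mult_embF .
  have "smult v Q = omult P' L"
  proof (rule poly_eqI)
    fix n
    have "Fract (coeff Q n) 1 = Fract (coeff (omult P' L) n) v"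
      using arg_cong[OF Q, of "\<lambda>X. coeff X n"] by (simp add: coeff_embF)
    then show "coeff (smult v Q) n = coeff (omult P' L) n"
      using v by (simp add: eq_fract mult.commute)
  qed
  with v show thesis
    by (rule that)
qed

lemma ore_cont_multiplier_coprime:
  assumes pid: "pid_type TYPE('a)" and p: "prime_elem p" and L: "\<not> [:[:p:]:] dvd L"
    and Q: "Q \<in> ore_cont \<sigma> \<delta> L"
  obtains v P where "v \<noteq> 0" "\<not> [:p:] dvd v" "smult v Q = omult P L"
proof -
  define S where "S = {lead_coeff v | v. v \<noteq> 0 \<and> (\<exists>P. smult v Q = omult P L)}"
  obtain v0 P0 where "v0 \<noteq> 0" "smult v0 Q = omult P0 L"
    using Q by (rule ore_cont_clear_denominators)
  then have "lead_coeff v0 \<in> S"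
    unfolding S_def by blast
  then obtain z where "z \<in> S" and min: "\<And>y. (y, z) \<in> strict_dvd_rel \<Longrightarrow> y \<notin> S"
    using wfE_min[OF wf_strict_dvd_rel[OF pid]] by metis
  then obtain v P where v: "z = lead_coeff v" "v \<noteq> 0" and vQ: "smult v Q = omult P L"
    unfolding S_def by blast
  have "\<not> [:p:] dvd v"
  proof
    \<comment> \<open>Dividing the multiplier by \<open>p\<close> would make its leading coefficient strictly smaller.\<close>
    assume "[:p:] dvd v"
    then obtain v1 where v1: "v = [:p:] * v1" ..
    with vQ have "smult [:p:] (smult v1 Q) = omult P L"
      by (simp add: smult_smult)
    then obtain P1 where "smult v1 Q = omult P1 L"
      using omult_cancel_const[OF p L] by metis
    moreover have "v1 \<noteq> 0"
      using v v1 by auto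
    ultimately have "lead_coeff v1 \<in> S"
      unfolding S_def by blast
    moreover have "(lead_coeff v1, z) \<in> strict_dvd_rel"
      using strict_dvd_rel_prime_cofactor[OF p] \<open>v1 \<noteq> 0\<close> v v1 by (simp add: lead_coeff_mult)
    ultimately show False
      using min by blast
  qed
  with v vQ show thesis
    using that by blast
qed

lemma ore_cont_lead_coeff_multiplier:
  assumes pid: "pid_type TYPE('a)" and p: "prime_elem p" and L: "\<not> [:[:p:]:] dvd L"
    and lc: "[:c:] dvd lead_coeff L" and Q: "Q \<in> ore_cont \<sigma> \<delta> L" "Q \<noteq> 0"
  shows "\<exists>u. \<not> [:p:] dvd u \<and> [:c:] dvd u * lead_coeff Q"
proof -
  obtain v P where v: "v \<noteq> 0" "\<not> [:p:] dvd v" and vQ: "smult v Q = omult P L"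
    using ore_cont_multiplier_coprime[OF pid p L Q(1)] .
  have "P \<noteq> 0" "L \<noteq> 0"
    using v(1) vQ Q(2) L by auto
  then have "v * lead_coeff Q = lead_coeff P * (\<sigma> ^^ degree P) (lead_coeff L)"
    by (metis lead_coeff_omult lead_coeff_smult vQ)
  moreover have "[:c:] dvd (\<sigma> ^^ degree P) (lead_coeff L)"
    using lc gamma_unit by (simp add: const_dvd_sigma_of_pow_iff)
  ultimately show ?thesis
    using v(2) by (metis dvd_mult)
qed

end

lemma R_primitive_not_const_dvd:
  assumes prim: "R_primitive L" and p: "prime_elem (p :: 'a::idom)"
  shows "\<not> [:[:p:]:] dvd L"
proof
  assume "[:[:p:]:] dvd L"
  then obtain K where K: "L = [:[:p:]:] * K" ..
  obtain a f where af: "\<And>i. coeff L i = smult (a i) (f i)" "\<And>i. primitive_R (f i)"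
    and gcd: "\<And>d. (\<forall>i\<le>degree L. d dvd a i) \<Longrightarrow> d dvd 1"
    using prim unfolding R_primitive_def by blast
  have "p dvd a i" for i
  proof -
    have "[:a i:] * f i = [:p:] * coeff K i"
      using af(1)[of i] K by simp
    then have "[:p:] dvd [:a i:] * f i" ..
    moreover have "\<not> [:p:] dvd f i"
      using af(2)[of i] p by (auto simp: primitive_R_def const_poly_dvd_iff prime_elem_def)
    ultimately have "[:p:] dvd [:a i:]"
      using p prime_elem_const_poly_iff prime_elem_dvd_multD by blast
    then show ?thesis
      by simp
  qed
  with gcd have "p dvd 1"
    by blast
  with p show False
    by (simp add: prime_elem_def)
qed

theorem mainTheorem4:
  fixes \<gamma> \<tau> c :: "'a::idom"
    and \<delta> :: "'a poly \<Rightarrow> 'a poly"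
    and L :: "'a poly poly"
  assumes pid: "pid_type TYPE('a)"
    and gamma_unit: "\<gamma> dvd 1"
    and delta_add: "\<And>p q. \<delta> (p + q) = \<delta> p + \<delta> q"
    and delta_lin: "\<And>r p. \<delta> (smult r p) = smult r (\<delta> p)"
    and delta_deriv: "\<And>f g. \<delta> (f * g) = sigma_of \<gamma> \<tau> f * \<delta> g + \<delta> f * g"
    and delta_x: "degree (\<delta> [:0, 1:]) \<le> 1"
    and ord: "degree L > 0"
    and nonunit: "\<not> c dvd 1"
    and prim: "R_primitive L"
    and dvd_lc: "[:c:] dvd lead_coeff L"
  shows "\<forall>Q \<in> ore_cont (sigma_of \<gamma> \<tau>) \<delta> L - {0}. [:c:] dvd lead_coeff Q"
proof
  interpret ore_algebra \<gamma> \<tau> \<delta>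
    by unfold_locales (fact gamma_unit delta_add delta_lin delta_deriv)+
  fix Q assume Q: "Q \<in> ore_cont \<sigma> \<delta> L - {0}"
  have "c \<noteq> 0"
    using dvd_lc ord by auto
  then show "[:c:] dvd lead_coeff Q"
  proof (rule const_poly_dvd_by_prime_multipliers[OF pid])
    fix p :: 'a assume "prime_elem p"
    then show "\<exists>u. \<not> [:p:] dvd u \<and> [:c:] dvd u * lead_coeff Q"
      using ore_cont_lead_coeff_multiplier[OF pid _ R_primitive_not_const_dvd[OF prim] dvd_lc] Q
      by blast
  qed
qed

end
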